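(* Let $L$ be a finite set of nests, $\mu>0$, and $\mu_\ell\in(0,\mu]$ for each $\ell\in L$. Let $\sigma_{i\ell}\ge 0$ ($i=1,\dots,n$, $\ell\in L$) satisfy $\sum_{\ell\in L}\sigma_{i\ell}=1$ for each $i$. Define the generalized nested logit generating function \[ G(x)=\sum_{\ell\in L}\left(\sum_{i=1}^n\left(\sigma_{i\ell}\,x^{(i)}\right)^{1/\mu_\ell}\right)^{\mu_\ell/\mu},\qquad x\in\mathbb{R}^n_+, \] and the surplus function $E(u)=\mu\ln G(e^{u})$. Then $E$ is $C$-differentially-consistent with $C=\dfrac{1}{\min_{\ell\in L}\mu_\ell}$, i.e. for all $U\in(-\infty,0)^n$ and all $i=1,\dots,n$, \[ \frac{\partial^2 E(U)}{\partial U^{(i)2}}\le \frac{1}{\min_{\ell\in L}\mu_\ell}\cdot\frac{\partial E(U)}{\partial U^{(i)}}. \]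
   Context: For $u\in\mathbb{R}^n$, $e^{u}$ denotes the componentwise exponential $(e^{u^{(1)}},\dots,e^{u^{(n)}})^T$. $\mathbb{R}^n_+$ is the set of vectors with nonnegative components. A convex function $f$ is called $C$-differentially-consistent (for a constant $C>0$) if $\nabla^2_{ii}f(U)\le C\,\nabla_i f(U)$ for all $U\in(-\infty,0)^n$ and all $i$. *)

theory Defs
  imports "HOL-Analysis.Analysis"
begin

definition vexp :: "real^'n \<Rightarrow> real^'n" where
  "vexp u = (\<chi> i. exp (u $ i))"

definition gnl_G :: "'l set \<Rightarrow> real \<Rightarrow> ('l \<Rightarrow> real) \<Rightarrow> ('n::finite \<Rightarrow> 'l \<Rightarrow> real)
    \<Rightarrow> real^'n \<Rightarrow> real" where
  "gnl_G L \<mu> \<mu>l \<sigma> x =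
     (\<Sum>l\<in>L. (\<Sum>i\<in>UNIV. (\<sigma> i l * x $ i) powr (1 / \<mu>l l)) powr (\<mu>l l / \<mu>))"

definition gnl_E :: "'l set \<Rightarrow> real \<Rightarrow> ('l \<Rightarrow> real) \<Rightarrow> ('n::finite \<Rightarrow> 'l \<Rightarrow> real)
    \<Rightarrow> real^'n \<Rightarrow> real" where
  "gnl_E L \<mu> \<mu>l \<sigma> u = \<mu> * ln (gnl_G L \<mu> \<mu>l \<sigma> (vexp u))"

definition partial :: "'n::finite \<Rightarrow> (real^'n \<Rightarrow> real) \<Rightarrow> real^'n \<Rightarrow> real" where
  "partial i f U = deriv (\<lambda>t. f (U + t *\<^sub>R axis i 1)) 0"

end

theory Submission
  imports Defs
begin

text \<open>Along a coordinate line \<open>U + t e\<^sub>i\<close>, the generating function is a sum over the nests of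
  terms \<open>p(t) = (a exp(t/\<rho>) + b) powr (\<rho>/\<mu>)\<close> with \<open>a, b \<ge> 0\<close> and \<open>\<rho> = \<mu>\<^sub>\<ell> \<le> \<mu>\<close>.
  With \<open>q = a exp(t/\<rho>) / (a exp(t/\<rho>) + b) \<in> [0,1]\<close> one finds \<open>p' = p q/\<mu> \<ge> 0\<close> and
  \<open>p'' = p' (q/\<mu> + (1 - q)/\<rho>) \<le> p'/\<rho>\<close>. The bound \<open>f'' \<le> C f'\<close> with \<open>f' \<ge> 0\<close> is preserved by
  sums and by enlarging \<open>C\<close>, and passes from \<open>G\<close> to \<open>\<mu> ln G\<close> because
  \<open>(\<mu> ln G)'' = \<mu> G''/G - \<mu> (G'/G)\<^sup>2 \<le> \<mu> G''/G\<close>.\<close>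

text \<open>Differential consistency of a function of one variable (the restriction of \<open>E\<close> to a
  coordinate line); requiring \<open>f' \<ge> 0\<close> is what allows \<open>C\<close> to be enlarged.\<close>
definition diff_consistent :: "real \<Rightarrow> (real \<Rightarrow> real) \<Rightarrow> bool" where
  "diff_consistent C f \<longleftrightarrow> (\<exists>f' f''. \<forall>t. (f has_real_derivative f' t) (at t)
      \<and> (f' has_real_derivative f'' t) (at t) \<and> 0 \<le> f' t \<and> f'' t \<le> C * f' t)"

lemma diff_consistent_mono:
  assumes "diff_consistent C f" and "C \<le> C'"
  shows "diff_consistent C' f"
proof -
  obtain f' f'' where f: "\<forall>t. (f has_real_derivative f' t) (at t)
      \<and> (f' has_real_derivative f'' t) (at t) \<and> 0 \<le> f' t \<and> f'' t \<le> C * f' t"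
    using assms(1) unfolding diff_consistent_def by blast
  have "f'' t \<le> C' * f' t" for t
    using f mult_right_mono[OF assms(2), of "f' t"] by (meson order_trans)
  with f show ?thesis
    unfolding diff_consistent_def by blast
qed

lemma diff_consistent_sum:
  assumes "finite L" and "\<And>l. l \<in> L \<Longrightarrow> diff_consistent C (f l)"
  shows "diff_consistent C (\<lambda>t. \<Sum>l\<in>L. f l t)"
proof -
  obtain f' f'' where f: "\<And>l t. l \<in> L \<Longrightarrow> (f l has_real_derivative f' l t) (at t)
      \<and> (f' l has_real_derivative f'' l t) (at t) \<and> 0 \<le> f' l t \<and> f'' l t \<le> C * f' l t"
    using assms(2) unfolding diff_consistent_def by metis
  show ?thesis
    unfolding diff_consistent_def
    using f by (intro exI[of _ "\<lambda>t. \<Sum>l\<in>L. f' l t"] exI[of _ "\<lambda>t. \<Sum>l\<in>L. f'' l t"])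
      (auto intro!: DERIV_sum sum_nonneg sum_mono simp: sum_distrib_left)
qed

lemma diff_consistent_ln:
  assumes "diff_consistent C f" and "\<And>t. 0 < f t" and "0 \<le> \<mu>"
  shows "diff_consistent C (\<lambda>t. \<mu> * ln (f t))"
proof -
  obtain f' f'' where f: "\<forall>t. (f has_real_derivative f' t) (at t)
      \<and> (f' has_real_derivative f'' t) (at t) \<and> 0 \<le> f' t \<and> f'' t \<le> C * f' t"
    using assms(1) unfolding diff_consistent_def by blast
  define g' where "g' t = \<mu> * (f' t / f t)" for t
  define g'' where "g'' t = \<mu> * ((f'' t * f t - f' t * f' t) / (f t * f t))" for t
  have "((\<lambda>t. \<mu> * ln (f t)) has_real_derivative g' t) (at t)" for t
    using f assms(2)[of t] unfolding g'_def
    by (auto intro!: derivative_eq_intros simp: field_simps)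
  moreover have "(g' has_real_derivative g'' t) (at t)" for t
    using f assms(2)[of t] unfolding g'_def g''_def
    by (auto intro!: derivative_eq_intros simp: field_simps)
  moreover have "0 \<le> g' t" for t
    using f assms(2)[of t] assms(3) unfolding g'_def by simp
  moreover have "g'' t \<le> C * g' t" for t
  proof -
    have "g'' t \<le> \<mu> * (f'' t * f t / (f t * f t))"
      unfolding g''_def using assms(2)[of t] assms(3)
      by (intro mult_left_mono divide_right_mono) auto
    also have "\<dots> = \<mu> / f t * f'' t"
      using assms(2)[of t] by (simp add: field_simps)
    also have "\<dots> \<le> \<mu> / f t * (C * f' t)"
      using f assms(2)[of t] assms(3) by (intro mult_left_mono) auto
    also have "\<dots> = C * g' t"
      unfolding g'_def by simp
    finally show ?thesis .
  qed
  ultimately show ?thesis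
    unfolding diff_consistent_def by blast
qed

lemma diff_consistent_nest_term:
  assumes "0 \<le> a" and "0 \<le> b" and "0 < \<rho>" and "\<rho> \<le> \<mu>"
  shows "diff_consistent (1 / \<rho>) (\<lambda>t. (a * exp (t / \<rho>) + b) powr (\<rho> / \<mu>))"
proof (cases "a = 0 \<and> b = 0")
  case True
  then show ?thesis
    unfolding diff_consistent_def by (intro exI[of _ "\<lambda>_. 0"]) simp
next
  case False
  define S where "S t = a * exp (t / \<rho>) + b" for t
  define p where "p t = S t powr (\<rho> / \<mu>)" for t
  define q where "q t = a * exp (t / \<rho>) / S t" for t
  define p' where "p' t = p t * q t / \<mu>" for t
  define p'' where "p'' t = p' t * (q t / \<mu> + (1 - q t) / \<rho>)" for t
  have S_pos: "0 < S t" for t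
    using False assms(1,2) unfolding S_def by (auto simp: add_pos_nonneg add_nonneg_pos)
  have S_deriv: "(S has_real_derivative a * exp (t / \<rho>) / \<rho>) (at t)" for t
    unfolding S_def using assms(3) by (auto intro!: derivative_eq_intros)
  have q_nonneg: "0 \<le> q t" for t
    using S_pos[of t] assms(1,2) unfolding q_def S_def by auto
  have p_deriv: "(p has_real_derivative p' t) (at t)" for t
    unfolding p_def p'_def q_def
    using S_pos[of t] assms(3,4)
    by (auto intro!: DERIV_powr[OF S_deriv, THEN DERIV_cong] simp: field_simps)
  moreover have "(p' has_real_derivative p'' t) (at t)" for t
  proof -
    have q_deriv: "(q has_real_derivative q t * (1 - q t) / \<rho>) (at t)"
    proof -
      have "((\<lambda>t. a * exp (t / \<rho>) / S t) has_real_derivative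
          ((a * exp (t / \<rho>) / \<rho>) * S t - a * exp (t / \<rho>) * (a * exp (t / \<rho>) / \<rho>)) / (S t * S t)) (at t)"
        using S_pos[of t] assms(3)
        by (intro DERIV_divide S_deriv) (auto intro!: derivative_eq_intros)
      then show ?thesis
        unfolding q_def[abs_def]
        by (rule DERIV_cong) (use S_pos[of t] assms(3) in \<open>simp add: field_simps\<close>)
    qed
    show ?thesis
      unfolding p'_def[abs_def] p''_def
      using assms(3,4)
      by (auto intro!: derivative_eq_intros p_deriv q_deriv simp: p'_def field_simps)
  qed
  moreover have "0 \<le> p' t" for t
    using q_nonneg[of t] assms(3,4) unfolding p'_def p_def by simp
  moreover have "p'' t \<le> 1 / \<rho> * p' t" for t
  proof -
    have "q t / \<mu> \<le> q t / \<rho>"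
      using q_nonneg[of t] assms(3,4) by (simp add: divide_left_mono)
    then have "q t / \<mu> + (1 - q t) / \<rho> \<le> 1 / \<rho>"
      by (simp add: diff_divide_distrib)
    then have "p' t * (q t / \<mu> + (1 - q t) / \<rho>) \<le> p' t * (1 / \<rho>)"
      using \<open>0 \<le> p' t\<close> by (rule mult_left_mono)
    then show ?thesis
      unfolding p''_def by simp
  qed
  ultimately show ?thesis
    unfolding diff_consistent_def p_def S_def by blast
qed

lemma partial_along_axis:
  assumes "\<And>s. ((\<lambda>t. f (U + t *\<^sub>R axis i 1)) has_real_derivative f' s) (at s)"
  shows "partial i f (U + s *\<^sub>R axis i 1) = f' s"
proof -
  have "((\<lambda>t. f (U + (t + s) *\<^sub>R axis i 1)) has_real_derivative f' s) (at 0)"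
    using assms[of s] DERIV_shift[of "\<lambda>t. f (U + t *\<^sub>R axis i 1)" "f' s" 0 s] by simp
  then show ?thesis
    unfolding partial_def by (simp add: DERIV_imp_deriv algebra_simps scaleR_add_left)
qed

lemma partial_partial_le_of_diff_consistent:
  assumes "diff_consistent C (\<lambda>t. f (U + t *\<^sub>R axis i 1))"
  shows "partial i (partial i f) U \<le> C * partial i f U"
proof -
  obtain f' f'' where f: "\<forall>t. ((\<lambda>t. f (U + t *\<^sub>R axis i 1)) has_real_derivative f' t) (at t)
      \<and> (f' has_real_derivative f'' t) (at t) \<and> 0 \<le> f' t \<and> f'' t \<le> C * f' t"
    using assms unfolding diff_consistent_def by blast
  then have "(\<lambda>t. partial i f (U + t *\<^sub>R axis i 1)) = f'"
    using partial_along_axis by blast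
  then have "partial i (partial i f) U = f'' 0"
    unfolding partial_def[of i "partial i f"] using f by (simp add: DERIV_imp_deriv)
  moreover have "partial i f U = f' 0"
    using partial_along_axis[of f U i f' 0] f by simp
  ultimately show ?thesis
    using f by simp
qed

lemma gnl_G_vexp_along_axis:
  "gnl_G L \<mu> \<mu>l \<sigma> (vexp (U + t *\<^sub>R axis i 1)) =
    (\<Sum>l\<in>L. ((\<sigma> i l * exp (U $ i)) powr (1 / \<mu>l l) * exp (t / \<mu>l l)
      + (\<Sum>j\<in>UNIV - {i}. (\<sigma> j l * exp (U $ j)) powr (1 / \<mu>l l))) powr (\<mu>l l / \<mu>))"
proof -
  have "(\<sigma> i l * exp (U $ i + t)) powr (1 / \<mu>l l)
      = (\<sigma> i l * exp (U $ i)) powr (1 / \<mu>l l) * exp (t / \<mu>l l)" for l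
    by (simp add: exp_add powr_mult exp_powr_real)
  then show ?thesis
    unfolding gnl_G_def vexp_def
    by (simp add: sum.remove[of UNIV i] axis_def)
qed

lemma gnl_G_vexp_pos:
  assumes "(\<Sum>l\<in>L. \<sigma> i l) = 1"
  shows "0 < gnl_G L \<mu> \<mu>l \<sigma> (vexp u)"
proof -
  obtain k where k: "k \<in> L" "\<sigma> i k \<noteq> 0"
    using assms by (metis sum.neutral zero_neq_one)
  have "finite L"
    using assms by (metis sum.infinite zero_neq_one)
  have "0 < (\<Sum>j\<in>UNIV. (\<sigma> j k * exp (u $ j)) powr (1 / \<mu>l k))"
    using k(2) by (intro sum_pos2[of UNIV i]) auto
  then show ?thesis
    unfolding gnl_G_def vexp_def using \<open>finite L\<close> k(1) by (intro sum_pos2[of L k]) auto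
qed

lemma diff_consistent_gnl_G_along_axis:
  assumes "finite L" and "L \<noteq> {}"
    and "\<And>l. l \<in> L \<Longrightarrow> 0 < \<mu>l l \<and> \<mu>l l \<le> \<mu>"
  shows "diff_consistent (1 / Min (\<mu>l ` L)) (\<lambda>t. gnl_G L \<mu> \<mu>l \<sigma> (vexp (U + t *\<^sub>R axis i 1)))"
  unfolding gnl_G_vexp_along_axis
proof (rule diff_consistent_sum[OF assms(1)])
  fix l
  assume "l \<in> L"
  have "0 < Min (\<mu>l ` L)"
    using assms by (subst Min_gr_iff) auto
  then have "1 / \<mu>l l \<le> 1 / Min (\<mu>l ` L)"
    using assms(1) \<open>l \<in> L\<close> by (simp add: frac_le)
  moreover have "diff_consistent (1 / \<mu>l l)
      (\<lambda>t. ((\<sigma> i l * exp (U $ i)) powr (1 / \<mu>l l) * exp (t / \<mu>l l)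
        + (\<Sum>j\<in>UNIV - {i}. (\<sigma> j l * exp (U $ j)) powr (1 / \<mu>l l))) powr (\<mu>l l / \<mu>))"
    (is "diff_consistent _ ?p")
    using assms(3)[OF \<open>l \<in> L\<close>] by (intro diff_consistent_nest_term) (auto intro: sum_nonneg)
  ultimately show "diff_consistent (1 / Min (\<mu>l ` L)) ?p"
    by (rule diff_consistent_mono[rotated])
qed

theorem theorem3:
  fixes L :: "'l set" and \<mu> :: real and \<mu>l :: "'l \<Rightarrow> real"
    and \<sigma> :: "'n::finite \<Rightarrow> 'l \<Rightarrow> real"
  assumes "finite L"
    and "\<mu> > 0"
    and "\<And>l. l \<in> L \<Longrightarrow> 0 < \<mu>l l \<and> \<mu>l l \<le> \<mu>"
    and "\<And>i l. l \<in> L \<Longrightarrow> \<sigma> i l \<ge> 0"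
    and "\<And>i. (\<Sum>l\<in>L. \<sigma> i l) = 1"
  shows "\<forall>U::real^'n. (\<forall>j. U $ j < 0) \<longrightarrow> (\<forall>i.
           partial i (partial i (gnl_E L \<mu> \<mu>l \<sigma>)) U
             \<le> (1 / Min (\<mu>l ` L)) * partial i (gnl_E L \<mu> \<mu>l \<sigma>) U)"
proof (intro allI impI)
  fix U :: "real^'n" and i :: 'n
  have "L \<noteq> {}"
    using assms(5)[of i] by auto
  then have "diff_consistent (1 / Min (\<mu>l ` L))
      (\<lambda>t. gnl_G L \<mu> \<mu>l \<sigma> (vexp (U + t *\<^sub>R axis i 1)))"
    using assms(1,3) by (intro diff_consistent_gnl_G_along_axis)
  then have "diff_consistent (1 / Min (\<mu>l ` L)) (\<lambda>t. gnl_E L \<mu> \<mu>l \<sigma> (U + t *\<^sub>R axis i 1))"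
    unfolding gnl_E_def using assms(2) gnl_G_vexp_pos[OF assms(5)]
    by (intro diff_consistent_ln) auto
  then show "partial i (partial i (gnl_E L \<mu> \<mu>l \<sigma>)) U
      \<le> (1 / Min (\<mu>l ` L)) * partial i (gnl_E L \<mu> \<mu>l \<sigma>) U"
    by (rule partial_partial_le_of_diff_consistent)
qed

end
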